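(* Let $t$ be a rooted tree with vertex set $I$ and $t'$ a rooted tree with vertex set $I'$. The intervals $[\widehat{0},t]$ in $\Pi_{\operatorname{NAP}}(I)$ and $[\widehat{0},t']$ in $\Pi_{\operatorname{NAP}}(I')$ are isomorphic posets if and only if $t$ and $t'$ have the same underlying unlabeled rooted tree (i.e. are isomorphic as rooted trees). Consequently the coinvariants of $\operatorname{NAP}$ are in bijection with the isomorphism classes of the posets $[\widehat{0},t]$, $t$ a rooted tree.
   Context: $\operatorname{NAP}(I)$ is the set of rooted trees with vertex set $I$; its coinvariants $\operatorname{NAP}(n)_{\mathfrak{S}_n}$ are the unlabeled rooted trees with $n$ vertices. $\Pi_{\operatorname{NAP}}(I)$ is the set of forests of rooted trees whose vertex set is exactly $I$, partially ordered as follows: $y$ covers $x$ iff $y$ is obtained from $x$ by adding an edge from the root of one component of $x$ to the root of another component (the latter root remaining the root); $\leq$ is the reflexive–transitive closure. $\widehat{0}$ is the forest of one-vertex trees. *)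

theory Defs
  imports Main
begin

text \<open>A rooted forest on the vertex set I is represented by its set of edges,
  each edge (c, p) pointing from a child c to its parent p.  Every vertex has at
  most one parent and there are no cycles; roots are the vertices without parent.\<close>

definition nap_forest :: "'a set \<Rightarrow> ('a \<times> 'a) set \<Rightarrow> bool" where
  "nap_forest I F \<longleftrightarrow> finite I \<and> F \<subseteq> I \<times> I
     \<and> (\<forall>x y z. (x, y) \<in> F \<longrightarrow> (x, z) \<in> F \<longrightarrow> y = z)
     \<and> (\<forall>x. (x, x) \<notin> F\<^sup>+)"

definition nap_is_root :: "'a set \<Rightarrow> ('a \<times> 'a) set \<Rightarrow> 'a \<Rightarrow> bool" where
  "nap_is_root I F r \<longleftrightarrow> r \<in> I \<and> (\<forall>y. (r, y) \<notin> F)"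

definition nap_rooted_tree :: "'a set \<Rightarrow> ('a \<times> 'a) set \<Rightarrow> bool" where
  "nap_rooted_tree I t \<longleftrightarrow> nap_forest I t \<and> (\<exists>!r. nap_is_root I t r)"

definition nap_cover :: "'a set \<Rightarrow> ('a \<times> 'a) set \<Rightarrow> ('a \<times> 'a) set \<Rightarrow> bool" where
  "nap_cover I x y \<longleftrightarrow> nap_forest I x \<and>
     (\<exists>r1 r2. r1 \<noteq> r2 \<and> nap_is_root I x r1 \<and> nap_is_root I x r2 \<and> y = insert (r1, r2) x)"

definition nap_le :: "'a set \<Rightarrow> ('a \<times> 'a) set \<Rightarrow> ('a \<times> 'a) set \<Rightarrow> bool" where
  "nap_le I x y \<longleftrightarrow> nap_forest I x \<and> (nap_cover I)\<^sup>*\<^sup>* x y"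

definition nap_bot :: "('a \<times> 'a) set" where
  "nap_bot = {}"

definition nap_interval :: "'a set \<Rightarrow> ('a \<times> 'a) set \<Rightarrow> ('a \<times> 'a) set set" where
  "nap_interval I t = {x. nap_le I nap_bot x \<and> nap_le I x t}"

definition poset_iso :: "'c set \<Rightarrow> ('c \<Rightarrow> 'c \<Rightarrow> bool) \<Rightarrow> 'd set \<Rightarrow> ('d \<Rightarrow> 'd \<Rightarrow> bool) \<Rightarrow> bool" where
  "poset_iso P leP Q leQ \<longleftrightarrow>
     (\<exists>f. bij_betw f P Q \<and> (\<forall>x\<in>P. \<forall>y\<in>P. leP x y \<longleftrightarrow> leQ (f x) (f y)))"

definition rooted_tree_iso :: "'a set \<Rightarrow> ('a \<times> 'a) set \<Rightarrow> 'b set \<Rightarrow> ('b \<times> 'b) set \<Rightarrow> bool" where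
  "rooted_tree_iso I t I' t' \<longleftrightarrow>
     (\<exists>g. bij_betw g I I' \<and> (\<forall>a\<in>I. \<forall>b\<in>I. (a, b) \<in> t \<longleftrightarrow> (g a, g b) \<in> t'))"

end

theory Submission
  imports Defs
begin

text \<open>A forest x lies below t in \<open>\<Pi>\<^sub>N\<^sub>A\<^sub>P(I)\<close> iff x arises from t by deleting edges such that
  every kept edge leaving a vertex p comes with all edges of t entering p; on such forests the
  order is inclusion.  The join-irreducible elements of this lattice are the edge sets of the
  subtrees at the non-root vertices v, each including the edge from v to its parent, and
  inclusion among them is the descendant order of t.  A rooted tree is the covering relation of
  its descendant order with the root adjoined as top, so the interval \<open>[0, t]\<close> determines t
  up to isomorphism; conversely a tree isomorphism transports the interval.\<close>

definition child_closed :: "('a \<times> 'a) set \<Rightarrow> ('a \<times> 'a) set \<Rightarrow> bool" where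
  "child_closed t x \<longleftrightarrow> (\<forall>p q c. (p, q) \<in> x \<longrightarrow> (c, p) \<in> t \<longrightarrow> (c, p) \<in> x)"

definition child_closed_subforests :: "('a \<times> 'a) set \<Rightarrow> ('a \<times> 'a) set set" where
  "child_closed_subforests t = {x. x \<subseteq> t \<and> child_closed t x}"

definition subtree_edges :: "('a \<times> 'a) set \<Rightarrow> 'a \<Rightarrow> ('a \<times> 'a) set" where
  "subtree_edges t v = {e \<in> t. (fst e, v) \<in> t\<^sup>*}"

definition join_irreducible :: "'c set set \<Rightarrow> 'c set \<Rightarrow> bool" where
  "join_irreducible L x \<longleftrightarrow> x \<in> L \<and> (\<exists>m\<in>L. m \<subset> x \<and> (\<forall>y\<in>L. y \<subset> x \<longrightarrow> y \<subseteq> m))"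

lemma poset_iso_cong:
  assumes "\<And>x y. x \<in> P \<Longrightarrow> y \<in> P \<Longrightarrow> leP x y \<longleftrightarrow> leP' x y"
    and "\<And>x y. x \<in> Q \<Longrightarrow> y \<in> Q \<Longrightarrow> leQ x y \<longleftrightarrow> leQ' x y"
  shows "poset_iso P leP Q leQ \<longleftrightarrow> poset_iso P leP' Q leQ'"
  unfolding poset_iso_def
proof (intro ex_cong1 conj_cong refl ball_cong)
  fix f x y assume "bij_betw f P Q" "x \<in> P" "y \<in> P"
  moreover from this have "f x \<in> Q" "f y \<in> Q" using bij_betwE by blast+
  ultimately show "(leP x y \<longleftrightarrow> leQ (f x) (f y)) \<longleftrightarrow> (leP' x y \<longleftrightarrow> leQ' (f x) (f y))"
    using assms by simp
qed

section \<open>Forests\<close>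

locale forest =
  fixes I :: "'a set" and t :: "('a \<times> 'a) set"
  assumes forest: "nap_forest I t"
begin

lemma edges_subset: "t \<subseteq> I \<times> I"
  using forest by (simp add: nap_forest_def)

lemma parent_unique: "(x, a) \<in> t \<Longrightarrow> (x, b) \<in> t \<Longrightarrow> a = b"
  using forest unfolding nap_forest_def by blast

lemma trancl_irrefl: "(x, x) \<notin> t\<^sup>+"
  using forest unfolding nap_forest_def by blast

lemma finite_edges: "finite t"
  using forest unfolding nap_forest_def by (meson finite_SigmaI finite_subset)

lemma wf_edges: "wf t" and wf_converse_edges: "wf (t\<inverse>)"
  using finite_edges trancl_irrefl
  by (auto simp: acyclic_def intro: finite_acyclic_wf finite_acyclic_wf_converse)

lemma subforest: "x \<subseteq> t \<Longrightarrow> nap_forest I x"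
  using forest trancl_mono_subset[of x t] unfolding nap_forest_def by blast

lemma rtrancl_antisym: "(a, b) \<in> t\<^sup>* \<Longrightarrow> (b, a) \<in> t\<^sup>* \<Longrightarrow> a = b"
  by (metis trancl_irrefl rtrancl_trancl_trancl rtranclD)

lemma trancl_through_parent: "(a, b) \<in> t \<Longrightarrow> (a, w) \<in> t\<^sup>+ \<Longrightarrow> (b, w) \<in> t\<^sup>*"
  by (metis parent_unique tranclD)

lemma edge_iff_covers:
  assumes "a \<in> I"
  shows "(a, b) \<in> t \<longleftrightarrow>
    (a, b) \<in> t\<^sup>* \<and> a \<noteq> b \<and> (\<forall>w\<in>I. (a, w) \<in> t\<^sup>* \<and> (w, b) \<in> t\<^sup>* \<longrightarrow> w = a \<or> w = b)"
proof
  assume ab: "(a, b) \<in> t"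
  have "w = a \<or> w = b" if "(a, w) \<in> t\<^sup>*" "(w, b) \<in> t\<^sup>*" for w
    using that trancl_through_parent[OF ab] rtrancl_antisym by (metis rtranclD)
  then show "(a, b) \<in> t\<^sup>* \<and> a \<noteq> b \<and> (\<forall>w\<in>I. (a, w) \<in> t\<^sup>* \<and> (w, b) \<in> t\<^sup>* \<longrightarrow> w = a \<or> w = b)"
    using ab trancl_irrefl by blast
next
  assume covers: "(a, b) \<in> t\<^sup>* \<and> a \<noteq> b \<and> (\<forall>w\<in>I. (a, w) \<in> t\<^sup>* \<and> (w, b) \<in> t\<^sup>* \<longrightarrow> w = a \<or> w = b)"
  then obtain p where ap: "(a, p) \<in> t" and "(p, b) \<in> t\<^sup>*"
    by (metis rtranclD tranclD)
  moreover have "p \<in> I" using ap edges_subset by blast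
  moreover have "p \<noteq> a" using ap trancl_irrefl by blast
  ultimately show "(a, b) \<in> t" using covers by blast
qed

end

text \<open>Taking c minimal among the tails of the edges of t missing from z, all child edges of c
  already lie in z, so adding the edge (c, p) is a cover step.\<close>

lemma (in forest) cover_step_within:
  assumes "z \<subset> t" "child_closed t z"
  obtains z' where "nap_cover I z z'" "z \<subset> z'" "z' \<subseteq> t" "child_closed t z'"
proof -
  obtain c0 where "c0 \<in> fst ` (t - z)" using assms(1) by fastforce
  then obtain c where c: "c \<in> fst ` (t - z)" and no_child: "\<And>d. (d, c) \<in> t \<Longrightarrow> d \<notin> fst ` (t - z)"
    using wf_edges unfolding wf_eq_minimal by metis
  then obtain p where cp: "(c, p) \<in> t" "(c, p) \<notin> z" by force
  have children: "(d, c) \<in> t \<Longrightarrow> (d, c) \<in> z" for d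
    using no_child by force
  have "nap_is_root I z c"
    using cp edges_subset parent_unique assms(1) unfolding nap_is_root_def by blast
  moreover have "nap_is_root I z p"
    using cp edges_subset assms unfolding nap_is_root_def child_closed_def by blast
  moreover have "c \<noteq> p" using cp trancl_irrefl by blast
  ultimately have "nap_cover I z (insert (c, p) z)"
    unfolding nap_cover_def using subforest assms(1) by blast
  moreover have "child_closed t (insert (c, p) z)"
    using assms(2) children unfolding child_closed_def by blast
  ultimately show ?thesis using that cp assms(1) by blast
qed

lemma (in forest) cover_chain_if_child_closed:
  "z \<subseteq> t \<Longrightarrow> child_closed t z \<Longrightarrow> (nap_cover I)\<^sup>*\<^sup>* z t"
proof (induction "card (t - z)" arbitrary: z rule: less_induct)
  case less
  show ?case
  proof (cases "z = t")
    case False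
    then obtain z' where z': "nap_cover I z z'" "z \<subset> z'" "z' \<subseteq> t" "child_closed t z'"
      using cover_step_within less.prems by blast
    then have "card (t - z') < card (t - z)"
      using finite_edges by (intro psubset_card_mono) auto
    then show ?thesis
      using less.hyps z' by (meson converse_rtranclp_into_rtranclp)
  qed simp
qed

lemma cover_chain_imp_child_closed:
  assumes "(nap_cover I)\<^sup>*\<^sup>* x y"
  shows "x \<subseteq> y \<and> child_closed y x"
  using assms
proof (induction rule: rtranclp_induct)
  case base
  then show ?case by (auto simp: child_closed_def)
next
  case (step y z)
  then obtain r1 r2 where r: "nap_is_root I y r2" "z = insert (r1, r2) y"
    by (auto simp: nap_cover_def)
  have "(c, p) \<in> x" if "(p, q) \<in> x" "(c, p) \<in> z" for p q c
  proof (cases "(c, p) \<in> y")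
    case False
    then have "p = r2" using that r by auto
    then show ?thesis using that step.IH r(1) by (auto simp: nap_is_root_def)
  qed (use that step.IH in \<open>auto simp: child_closed_def\<close>)
  then show ?case using step.IH r by (auto simp: child_closed_def)
qed

lemma (in forest) nap_interval_eq: "nap_interval I t = child_closed_subforests t"
proof (intro set_eqI iffI)
  fix x assume "x \<in> nap_interval I t"
  then show "x \<in> child_closed_subforests t"
    using cover_chain_imp_child_closed
    unfolding nap_interval_def nap_le_def child_closed_subforests_def by blast
next
  fix x assume x: "x \<in> child_closed_subforests t"
  then interpret x: forest I x
    by unfold_locales (simp add: subforest child_closed_subforests_def)
  have "(nap_cover I)\<^sup>*\<^sup>* {} x" by (rule x.cover_chain_if_child_closed) (auto simp: child_closed_def)
  moreover have "(nap_cover I)\<^sup>*\<^sup>* x t"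
    using x cover_chain_if_child_closed by (simp add: child_closed_subforests_def)
  ultimately show "x \<in> nap_interval I t"
    unfolding nap_interval_def nap_le_def nap_bot_def using x.forest subforest by blast
qed

lemma (in forest) nap_le_iff_subset:
  assumes "x \<in> nap_interval I t" "y \<in> nap_interval I t"
  shows "nap_le I x y \<longleftrightarrow> x \<subseteq> y"
proof
  assume "nap_le I x y"
  then show "x \<subseteq> y" using cover_chain_imp_child_closed unfolding nap_le_def by blast
next
  assume "x \<subseteq> y"
  have x: "x \<subseteq> t" "child_closed t x" and y: "y \<subseteq> t"
    using assms by (auto simp: nap_interval_eq child_closed_subforests_def)
  interpret y: forest I y by unfold_locales (rule subforest[OF y])
  have "child_closed y x" using x y unfolding child_closed_def by blast
  then show "nap_le I x y"
    using y.cover_chain_if_child_closed \<open>x \<subseteq> y\<close> subforest x unfolding nap_le_def by blast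
qed

lemma poset_iso_nap_interval_iff:
  assumes "nap_forest I t" "nap_forest I' t'"
  shows "poset_iso (nap_interval I t) (nap_le I) (nap_interval I' t') (nap_le I')
    \<longleftrightarrow> poset_iso (child_closed_subforests t) (\<subseteq>) (child_closed_subforests t') (\<subseteq>)"
proof -
  interpret T: forest I t by (rule forest.intro) fact
  interpret T': forest I' t' by (rule forest.intro) fact
  show ?thesis
    using poset_iso_cong[OF T.nap_le_iff_subset T'.nap_le_iff_subset]
    by (simp add: T.nap_interval_eq T'.nap_interval_eq)
qed

section \<open>Transport along a tree isomorphism\<close>

lemma child_closed_image:
  assumes "bij_betw g I I'" "t \<subseteq> I \<times> I"
    and edges: "\<forall>a\<in>I. \<forall>b\<in>I. (a, b) \<in> t \<longleftrightarrow> (g a, g b) \<in> t'"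
    and x: "x \<in> child_closed_subforests t" and t': "t' \<subseteq> I' \<times> I'"
  shows "map_prod g g ` x \<in> child_closed_subforests t'"
proof -
  have x_sub: "x \<subseteq> t" and x_closed: "child_closed t x"
    using x by (auto simp: child_closed_subforests_def)
  have "(c', g a) \<in> map_prod g g ` x" if ab: "(a, b) \<in> x" and c'a: "(c', g a) \<in> t'" for a b c'
  proof -
    obtain c where c: "c \<in> I" "c' = g c"
      using c'a t' assms(1) by (auto simp: bij_betw_def)
    have "a \<in> I" using ab x_sub assms(2) by blast
    then have "(c, a) \<in> x"
      using ab c'a c edges x_closed unfolding child_closed_def by blast
    then show ?thesis using c by force
  qed
  then show ?thesis
    using x_sub assms(2) edges by (fastforce simp: child_closed_subforests_def child_closed_def)
qed

lemma rooted_tree_iso_inverse: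
  assumes "bij_betw g I I'" "\<forall>a\<in>I. \<forall>b\<in>I. (a, b) \<in> t \<longleftrightarrow> (g a, g b) \<in> t'"
  shows "\<forall>a\<in>I'. \<forall>b\<in>I'. (a, b) \<in> t' \<longleftrightarrow> (inv_into I g a, inv_into I g b) \<in> t"
proof (intro ballI)
  fix a b assume ab: "a \<in> I'" "b \<in> I'"
  then have "inv_into I g a \<in> I" "inv_into I g b \<in> I"
    using bij_betwE[OF bij_betw_inv_into[OF assms(1)]] by blast+
  moreover have "g (inv_into I g a) = a" "g (inv_into I g b) = b"
    using ab assms(1) by (simp_all add: bij_betw_inv_into_right)
  ultimately show "(a, b) \<in> t' \<longleftrightarrow> (inv_into I g a, inv_into I g b) \<in> t"
    using assms(2) by force
qed

lemma poset_iso_if_rooted_tree_iso: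
  assumes "t \<subseteq> I \<times> I" "t' \<subseteq> I' \<times> I'" "rooted_tree_iso I t I' t'"
  shows "poset_iso (child_closed_subforests t) (\<subseteq>) (child_closed_subforests t') (\<subseteq>)"
proof -
  obtain g where g: "bij_betw g I I'" and edges: "\<forall>a\<in>I. \<forall>b\<in>I. (a, b) \<in> t \<longleftrightarrow> (g a, g b) \<in> t'"
    using assms(3) by (auto simp: rooted_tree_iso_def)
  define g' where "g' = inv_into I g"
  have g': "bij_betw g' I' I" and edges': "\<forall>a\<in>I'. \<forall>b\<in>I'. (a, b) \<in> t' \<longleftrightarrow> (g' a, g' b) \<in> t"
    using bij_betw_inv_into[OF g] rooted_tree_iso_inverse[OF g edges] by (simp_all add: g'_def)
  let ?L = "child_closed_subforests t" and ?L' = "child_closed_subforests t'"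
  let ?f = "(`) (map_prod g g)" and ?f' = "(`) (map_prod g' g')"
  have left: "\<forall>x\<in>?L. ?f' (?f x) = x"
  proof
    fix x assume "x \<in> ?L"
    then have "x \<subseteq> I \<times> I" using assms(1) by (auto simp: child_closed_subforests_def)
    moreover have "g' (g a) = a" if "a \<in> I" for a
      using that g by (simp add: g'_def bij_betw_inv_into_left)
    ultimately have "\<forall>e\<in>x. map_prod g' g' (map_prod g g e) = e" by auto
    then show "?f' (?f x) = x" by (simp add: image_image)
  qed
  have right: "\<forall>x'\<in>?L'. ?f (?f' x') = x'"
  proof
    fix x' assume "x' \<in> ?L'"
    then have "x' \<subseteq> I' \<times> I'" using assms(2) by (auto simp: child_closed_subforests_def)
    moreover have "g (g' a) = a" if "a \<in> I'" for a
      using that g by (simp add: g'_def bij_betw_inv_into_right)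
    ultimately have "\<forall>e\<in>x'. map_prod g g (map_prod g' g' e) = e" by auto
    then show "?f (?f' x') = x'" by (simp add: image_image)
  qed
  have "bij_betw ?f ?L ?L'"
  proof (rule bij_betw_byWitness[where f' = ?f'])
    show "?f ` ?L \<subseteq> ?L'" using child_closed_image[OF g assms(1) edges _ assms(2)] by blast
    show "?f' ` ?L' \<subseteq> ?L" using child_closed_image[OF g' assms(2) edges' _ assms(1)] by blast
  qed (rule left right)+
  moreover have "x \<subseteq> y \<longleftrightarrow> ?f x \<subseteq> ?f y" if "x \<in> ?L" "y \<in> ?L" for x y
  proof
    assume "?f x \<subseteq> ?f y"
    then have "?f' (?f x) \<subseteq> ?f' (?f y)" by (rule image_mono)
    then show "x \<subseteq> y" using left that by simp
  qed (rule image_mono)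
  ultimately show ?thesis unfolding poset_iso_def by blast
qed

section \<open>Join-irreducible forests\<close>

lemma join_irreducible_iso:
  assumes "bij_betw f L L'" "\<forall>x\<in>L. \<forall>y\<in>L. x \<subseteq> y \<longleftrightarrow> f x \<subseteq> f y" "x \<in> L"
  shows "join_irreducible L' (f x) \<longleftrightarrow> join_irreducible L x"
proof -
  have image: "f ` L = L'" using assms(1) by (simp add: bij_betw_def)
  have ex: "(\<exists>m'\<in>L'. Q m') \<longleftrightarrow> (\<exists>m\<in>L. Q (f m))"
    and all: "(\<forall>m'\<in>L'. Q m') \<longleftrightarrow> (\<forall>m\<in>L. Q (f m))" for Q
    using image by blast+
  have "(\<exists>m\<in>L. f m \<subset> f x \<and> (\<forall>y\<in>L. f y \<subset> f x \<longrightarrow> f y \<subseteq> f m))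
      \<longleftrightarrow> (\<exists>m\<in>L. m \<subset> x \<and> (\<forall>y\<in>L. y \<subset> x \<longrightarrow> y \<subseteq> m))"
    using assms(2,3) by (auto simp: less_le_not_le)
  then show ?thesis unfolding join_irreducible_def ex all using image assms(3) by blast
qed

lemma bij_betw_join_irreducibles:
  assumes "bij_betw f L L'" "\<forall>x\<in>L. \<forall>y\<in>L. x \<subseteq> y \<longleftrightarrow> f x \<subseteq> f y"
  shows "bij_betw f (Collect (join_irreducible L)) (Collect (join_irreducible L'))"
proof (rule bij_betw_subset[OF assms(1)])
  show "Collect (join_irreducible L) \<subseteq> L" by (auto simp: join_irreducible_def)
  show "f ` Collect (join_irreducible L) = Collect (join_irreducible L')"
  proof (intro equalityI subsetI)
    fix y assume "y \<in> f ` Collect (join_irreducible L)"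
    then show "y \<in> Collect (join_irreducible L')"
      using join_irreducible_iso[OF assms] by (auto simp: join_irreducible_def[of L])
  next
    fix y assume y: "y \<in> Collect (join_irreducible L')"
    then have "y \<in> f ` L" using assms(1) by (simp add: bij_betw_def join_irreducible_def)
    then show "y \<in> f ` Collect (join_irreducible L)"
      using y join_irreducible_iso[OF assms] by auto
  qed
qed

lemma subtree_edges_child_closed: "subtree_edges t v \<in> child_closed_subforests t"
  unfolding child_closed_subforests_def child_closed_def subtree_edges_def
  by (auto intro: converse_rtrancl_into_rtrancl)

lemma (in forest) subtree_edges_subset:
  assumes "x \<in> child_closed_subforests t" "(c, q) \<in> x"
  shows "subtree_edges t c \<subseteq> x"
proof
  fix e assume "e \<in> subtree_edges t c"
  then obtain a b where e: "e = (a, b)" "(a, b) \<in> t" and ac: "(a, c) \<in> t\<^sup>*"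
    by (cases e) (auto simp: subtree_edges_def)
  from ac have "\<exists>q. (a, q) \<in> x"
  proof (induction rule: converse_rtrancl_induct)
    case (step a a')
    then show ?case using assms(1) unfolding child_closed_subforests_def child_closed_def by blast
  qed (use assms(2) in blast)
  then show "e \<in> x"
    using e parent_unique assms(1) by (auto simp: child_closed_subforests_def)
qed

lemma (in forest) top_edge_exists:
  assumes "x \<subseteq> t" "x \<noteq> {}"
  obtains c p where "(c, p) \<in> x" "\<And>q. (p, q) \<notin> x"
proof -
  obtain p where p: "p \<in> snd ` x" and top: "\<And>q. (q, p) \<in> t\<inverse> \<Longrightarrow> q \<notin> snd ` x"
    using wf_converse_edges assms(2) unfolding wf_eq_minimal by (metis all_not_in_conv imageI)
  then show ?thesis
    using that assms(1) by force
qed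

lemma (in forest) remove_subtree_edges_child_closed:
  assumes x: "x \<in> child_closed_subforests t" and cp: "(c, p) \<in> x" and top: "\<And>q. (p, q) \<notin> x"
  shows "x - subtree_edges t c \<in> child_closed_subforests t"
proof -
  have "(d, a) \<notin> subtree_edges t c" if ab: "(a, b) \<in> x" "(a, b) \<notin> subtree_edges t c"
    and da: "(d, a) \<in> t" for a b d
  proof
    assume "(d, a) \<in> subtree_edges t c"
    then have dc: "(d, c) \<in> t\<^sup>*" by (simp add: subtree_edges_def)
    show False
    proof (cases "d = c")
      case True
      then have "a = p"
        using da cp x parent_unique by (auto simp: child_closed_subforests_def)
      then show False using ab(1) top by blast
    next
      case False
      then have "(a, c) \<in> t\<^sup>*" using dc da trancl_through_parent by (metis rtranclD)
      then show False using ab x by (auto simp: subtree_edges_def child_closed_subforests_def)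
    qed
  qed
  then show ?thesis
    using x unfolding child_closed_subforests_def child_closed_def by blast
qed

section \<open>Rooted trees\<close>

locale rooted_tree = forest I t for I :: "'a set" and t +
  fixes r :: 'a
  assumes root: "nap_is_root I t r"
    and parent_exists: "v \<in> I \<Longrightarrow> v \<noteq> r \<Longrightarrow> \<exists>p. (v, p) \<in> t"
begin

lemma root_in: "r \<in> I" and root_no_parent: "(r, b) \<notin> t"
  using root by (simp_all add: nap_is_root_def)

lemma rtrancl_from_root: "(r, b) \<in> t\<^sup>* \<Longrightarrow> b = r"
  by (erule converse_rtranclE) (auto simp: root_no_parent)

lemma rtrancl_to_root: "a \<in> I \<Longrightarrow> (a, r) \<in> t\<^sup>*"
proof (induction a rule: wf_induct_rule[OF wf_converse_edges])
  case (1 a)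
  show ?case
  proof (cases "a = r")
    case False
    then obtain p where "(a, p) \<in> t" using parent_exists 1 by blast
    then show ?thesis using 1 edges_subset by (blast intro: converse_rtrancl_into_rtrancl)
  qed simp
qed

lemma subtree_edges_subset_iff:
  assumes "u \<in> I - {r}"
  shows "subtree_edges t u \<subseteq> subtree_edges t v \<longleftrightarrow> (u, v) \<in> t\<^sup>*"
proof
  obtain p where "(u, p) \<in> t" using parent_exists assms by blast
  then show "subtree_edges t u \<subseteq> subtree_edges t v \<Longrightarrow> (u, v) \<in> t\<^sup>*"
    by (auto simp: subtree_edges_def)
qed (auto simp: subtree_edges_def)

lemma join_irreducible_subtree_edges:
  assumes v: "v \<in> I - {r}"
  shows "join_irreducible (child_closed_subforests t) (subtree_edges t v)"
proof -
  obtain p where p: "(v, p) \<in> t" using parent_exists v by blast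
  define m where "m = subtree_edges t v - {(v, p)}"
  have "(d, a) \<in> m" if "(a, b) \<in> m" "(d, a) \<in> t" for a b d
  proof -
    have av: "(a, v) \<in> t\<^sup>*" using that(1) by (simp add: m_def subtree_edges_def)
    with that(2) have "(d, v) \<in> t\<^sup>*" by (rule converse_rtrancl_into_rtrancl)
    moreover have "d \<noteq> v" using that(2) av trancl_irrefl by (metis rtrancl_into_trancl2)
    ultimately show ?thesis using that(2) by (simp add: m_def subtree_edges_def)
  qed
  then have m_closed: "m \<in> child_closed_subforests t"
    unfolding child_closed_subforests_def child_closed_def m_def subtree_edges_def by blast
  have "(v, p) \<in> subtree_edges t v" using p by (simp add: subtree_edges_def)
  then have m_less: "m \<subset> subtree_edges t v" unfolding m_def by blast
  have below_m: "y \<subseteq> m" if "y \<in> child_closed_subforests t" "y \<subset> subtree_edges t v" for y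
    using that subtree_edges_subset[OF that(1), of v p] unfolding m_def by blast
  show ?thesis
    unfolding join_irreducible_def
    using subtree_edges_child_closed[of t v] m_closed m_less below_m by blast
qed

lemma join_irreducible_imp_subtree_edges:
  assumes J: "join_irreducible (child_closed_subforests t) x"
  shows "\<exists>v\<in>I - {r}. x = subtree_edges t v"
proof -
  obtain m where x: "x \<in> child_closed_subforests t" and m: "m \<subset> x"
    and below: "\<forall>y\<in>child_closed_subforests t. y \<subset> x \<longrightarrow> y \<subseteq> m"
    using J unfolding join_irreducible_def by blast
  note below_m = below[rule_format]
  have x_sub: "x \<subseteq> t" using x by (simp add: child_closed_subforests_def)
  moreover have "x \<noteq> {}" using m by blast
  ultimately obtain c p where cp: "(c, p) \<in> x" and top: "\<And>q. (p, q) \<notin> x"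
    by (rule top_edge_exists) blast
  have c: "c \<in> I - {r}"
    using cp x_sub edges_subset root_no_parent by blast
  have "(c, p) \<in> subtree_edges t c"
    using cp x_sub by (auto simp: subtree_edges_def)
  then have "x - subtree_edges t c \<subset> x" using cp by blast
  then have rest: "x - subtree_edges t c \<subseteq> m"
    by (rule below_m[OF remove_subtree_edges_child_closed[OF x cp top]])
  have subtree: "subtree_edges t c \<subseteq> x" using subtree_edges_subset x cp .
  have "x = subtree_edges t c"
  proof (rule ccontr)
    assume "x \<noteq> subtree_edges t c"
    with subtree have "subtree_edges t c \<subseteq> m"
      using below_m[OF subtree_edges_child_closed] by blast
    with rest m show False by blast
  qed
  then show ?thesis using c by blast
qed

lemma bij_betw_subtree_edges:
  "bij_betw (subtree_edges t) (I - {r}) (Collect (join_irreducible (child_closed_subforests t)))"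
proof -
  have "u = v" if "u \<in> I - {r}" "v \<in> I - {r}" "subtree_edges t u = subtree_edges t v" for u v
    using that subtree_edges_subset_iff[OF that(1), of v] subtree_edges_subset_iff[OF that(2), of u]
    by (simp add: rtrancl_antisym)
  then have "inj_on (subtree_edges t) (I - {r})" by (rule inj_onI)
  moreover have "subtree_edges t ` (I - {r}) = Collect (join_irreducible (child_closed_subforests t))"
    using join_irreducible_subtree_edges join_irreducible_imp_subtree_edges by blast
  ultimately show ?thesis by (simp add: bij_betw_def)
qed

end

lemma rooted_tree_of_nap_rooted_tree:
  assumes "nap_rooted_tree I t" "nap_is_root I t r"
  shows "rooted_tree I t r"
proof -
  have unique: "\<exists>!r. nap_is_root I t r" using assms(1) by (simp add: nap_rooted_tree_def)
  have "\<exists>p. (v, p) \<in> t" if "v \<in> I" "v \<noteq> r" for v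
  proof (rule ccontr)
    assume "\<nexists>p. (v, p) \<in> t"
    then have "nap_is_root I t v" using that(1) by (simp add: nap_is_root_def)
    then show False using unique assms(2) that(2) by blast
  qed
  then show ?thesis using assms
    by (simp add: rooted_tree_def rooted_tree_axioms_def forest_def nap_rooted_tree_def)
qed

section \<open>Recovering the tree from its interval\<close>

lemma rooted_tree_iso_if_rtrancl_iso:
  assumes "forest I t" "forest I' t'" and g: "bij_betw g I I'"
    and star: "\<forall>a\<in>I. \<forall>b\<in>I. (a, b) \<in> t\<^sup>* \<longleftrightarrow> (g a, g b) \<in> t'\<^sup>*"
  shows "rooted_tree_iso I t I' t'"
proof -
  interpret T: forest I t by fact
  interpret T': forest I' t' by fact
  have "(a, b) \<in> t \<longleftrightarrow> (g a, g b) \<in> t'" if a: "a \<in> I" and b: "b \<in> I" for a b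
  proof -
    have gI: "g ` I = I'" and inj: "inj_on g I" using g by (auto simp: bij_betw_def)
    have "(a, b) \<in> t \<longleftrightarrow> (a, b) \<in> t\<^sup>* \<and> a \<noteq> b \<and>
        (\<forall>w\<in>I. (a, w) \<in> t\<^sup>* \<and> (w, b) \<in> t\<^sup>* \<longrightarrow> w = a \<or> w = b)"
      by (rule T.edge_iff_covers[OF a])
    also have "\<dots> \<longleftrightarrow> (g a, g b) \<in> t'\<^sup>* \<and> g a \<noteq> g b \<and>
        (\<forall>w\<in>I. (g a, g w) \<in> t'\<^sup>* \<and> (g w, g b) \<in> t'\<^sup>* \<longrightarrow> g w = g a \<or> g w = g b)"
      using a b by (simp add: star[rule_format] inj_on_eq_iff[OF inj])
    also have "\<dots> \<longleftrightarrow> (g a, g b) \<in> t'\<^sup>* \<and> g a \<noteq> g b \<and>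
        (\<forall>w\<in>I'. (g a, w) \<in> t'\<^sup>* \<and> (w, g b) \<in> t'\<^sup>* \<longrightarrow> w = g a \<or> w = g b)"
      unfolding gI[symmetric] by simp
    also have "\<dots> \<longleftrightarrow> (g a, g b) \<in> t'"
      using T'.edge_iff_covers[of "g a" "g b"] a gI by blast
    finally show ?thesis .
  qed
  then show ?thesis using g by (auto simp: rooted_tree_iso_def)
qed

lemma rooted_tree_iso_if_rtrancl_iso_off_root:
  assumes T: "rooted_tree I t r" and T': "rooted_tree I' t' r'"
    and g0: "bij_betw g0 (I - {r}) (I' - {r'})"
    and star0: "\<forall>u\<in>I - {r}. \<forall>v\<in>I - {r}. (u, v) \<in> t\<^sup>* \<longleftrightarrow> (g0 u, g0 v) \<in> t'\<^sup>*"
  shows "rooted_tree_iso I t I' t'"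
proof -
  interpret T: rooted_tree I t r by (rule T)
  interpret T': rooted_tree I' t' r' by (rule T')
  define g where "g = g0(r := r')"
  have "bij_betw g (I - {r}) (I' - {r'})"
    using g0 bij_betw_cong[of "I - {r}" g0 g "I' - {r'}"] by (simp add: g_def)
  then have "bij_betw g I I'"
    using notIn_Un_bij_betw[of r "I - {r}" g "I' - {r'}"] T.root_in T'.root_in
    by (simp add: g_def insert_absorb)
  moreover have "(a, b) \<in> t\<^sup>* \<longleftrightarrow> (g a, g b) \<in> t'\<^sup>*" if a: "a \<in> I" and b: "b \<in> I" for a b
  proof (cases "a = r"; cases "b = r")
    assume "a = r" "b \<noteq> r"
    then show ?thesis
      using b bij_betwE[OF g0] T.rtrancl_from_root T'.rtrancl_from_root by (auto simp: g_def)
  next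
    assume "a \<noteq> r" "b = r"
    then show ?thesis
      using a bij_betwE[OF g0] T.rtrancl_to_root T'.rtrancl_to_root by (auto simp: g_def)
  next
    assume "a \<noteq> r" "b \<noteq> r"
    then show ?thesis using a b star0 by (simp add: g_def)
  qed (simp add: g_def)
  ultimately show ?thesis
    using rooted_tree_iso_if_rtrancl_iso T.forest_axioms T'.forest_axioms by blast
qed

lemma rooted_tree_iso_if_poset_iso:
  assumes T: "rooted_tree I t r" and T': "rooted_tree I' t' r'"
    and iso: "poset_iso (child_closed_subforests t) (\<subseteq>) (child_closed_subforests t') (\<subseteq>)"
  shows "rooted_tree_iso I t I' t'"
proof -
  interpret T: rooted_tree I t r by (rule T)
  interpret T': rooted_tree I' t' r' by (rule T')
  obtain f where f: "bij_betw f (child_closed_subforests t) (child_closed_subforests t')"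
    and f_mono: "\<forall>x\<in>child_closed_subforests t. \<forall>y\<in>child_closed_subforests t. x \<subseteq> y \<longleftrightarrow> f x \<subseteq> f y"
    using iso unfolding poset_iso_def by blast
  let ?J = "Collect (join_irreducible (child_closed_subforests t))"
    and ?J' = "Collect (join_irreducible (child_closed_subforests t'))"
  have f_J: "bij_betw f ?J ?J'" using bij_betw_join_irreducibles[OF f f_mono] .
  define g0 where "g0 = inv_into (I' - {r'}) (subtree_edges t') \<circ> (f \<circ> subtree_edges t)"
  have "bij_betw (f \<circ> subtree_edges t) (I - {r}) ?J'"
    using T.bij_betw_subtree_edges f_J by (rule bij_betw_trans)
  then have g0: "bij_betw g0 (I - {r}) (I' - {r'})"
    unfolding g0_def using bij_betw_inv_into[OF T'.bij_betw_subtree_edges] by (rule bij_betw_trans)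
  have subtree_g0: "subtree_edges t' (g0 v) = f (subtree_edges t v)" if "v \<in> I - {r}" for v
  proof -
    have "f (subtree_edges t v) \<in> ?J'"
      using bij_betwE[OF T.bij_betw_subtree_edges] bij_betwE[OF f_J] that by blast
    then have "f (subtree_edges t v) \<in> subtree_edges t' ` (I' - {r'})"
      using T'.bij_betw_subtree_edges by (simp add: bij_betw_def)
    then show ?thesis by (simp add: g0_def f_inv_into_f)
  qed
  have "(u, v) \<in> t\<^sup>* \<longleftrightarrow> (g0 u, g0 v) \<in> t'\<^sup>*" if u: "u \<in> I - {r}" and v: "v \<in> I - {r}" for u v
  proof -
    have "(u, v) \<in> t\<^sup>* \<longleftrightarrow> subtree_edges t u \<subseteq> subtree_edges t v"
      using T.subtree_edges_subset_iff[OF u] by simp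
    also have "\<dots> \<longleftrightarrow> f (subtree_edges t u) \<subseteq> f (subtree_edges t v)"
      by (rule f_mono[rule_format, OF subtree_edges_child_closed subtree_edges_child_closed])
    also have "\<dots> \<longleftrightarrow> subtree_edges t' (g0 u) \<subseteq> subtree_edges t' (g0 v)"
      using subtree_g0[OF u] subtree_g0[OF v] by simp
    also have "\<dots> \<longleftrightarrow> (g0 u, g0 v) \<in> t'\<^sup>*"
      using T'.subtree_edges_subset_iff bij_betwE[OF g0] u by blast
    finally show ?thesis .
  qed
  then show ?thesis
    using rooted_tree_iso_if_rtrancl_iso_off_root[OF T T' g0] by blast
qed

theorem proposition6p6:
  fixes I :: "'a set" and t :: "('a \<times> 'a) set"
    and I' :: "'b set" and t' :: "('b \<times> 'b) set"
  assumes "nap_rooted_tree I t" and "nap_rooted_tree I' t'"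
  shows "poset_iso (nap_interval I t) (nap_le I) (nap_interval I' t') (nap_le I')
         \<longleftrightarrow> rooted_tree_iso I t I' t'"
proof -
  obtain r r' where r: "nap_is_root I t r" and r': "nap_is_root I' t' r'"
    using assms unfolding nap_rooted_tree_def by blast
  have T: "rooted_tree I t r" using rooted_tree_of_nap_rooted_tree[OF assms(1) r] .
  have T': "rooted_tree I' t' r'" using rooted_tree_of_nap_rooted_tree[OF assms(2) r'] .
  interpret T: rooted_tree I t r by (rule T)
  interpret T': rooted_tree I' t' r' by (rule T')
  show ?thesis
    unfolding poset_iso_nap_interval_iff[OF T.forest T'.forest]
    using rooted_tree_iso_if_poset_iso[OF T T']
      poset_iso_if_rooted_tree_iso[OF T.edges_subset T'.edges_subset] by blast
qed

end
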